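(* Let $j,k\geq 2$ and $i\geq k+4$ be integers. Then $$R_k^{\mathcal{CA}}(i,j)=j-1+\Big\lceil\frac{j-1}{k}\Big\rceil,$$ where $\mathcal{CA}$ is the class of cacti.
   Context: All graphs are finite and simple. For a graph $G$ and a nonnegative integer $k$, a $k$-sparse $j$-set is a set of $j$ vertices of $G$ inducing a subgraph of maximum degree at most $k$; a $k$-dense $i$-set is a set of $i$ vertices of $G$ that is $k$-sparse in the complement of $G$. For a graph class $\mathcal{G}$, $R_k^{\mathcal{G}}(i,j)$ is the smallest natural number $n$ such that every graph on $n$ vertices in $\mathcal{G}$ has either a $k$-dense $i$-set or a $k$-sparse $j$-set. A cactus is a graph (not necessarily connected) in which every block is a cycle, a single edge, or a single vertex. *)

theory Defs
  imports Complex_Main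
begin

definition simple_graph :: "'a set \<Rightarrow> ('a \<Rightarrow> 'a \<Rightarrow> bool) \<Rightarrow> bool" where
  "simple_graph V E \<longleftrightarrow> finite V \<and> (\<forall>x y. E x y \<longrightarrow> x \<in> V \<and> y \<in> V \<and> x \<noteq> y \<and> E y x)"

text \<open>The induced subgraph on S is connected (the empty set counts as connected).\<close>
definition connected_on :: "('a \<Rightarrow> 'a \<Rightarrow> bool) \<Rightarrow> 'a set \<Rightarrow> bool" where
  "connected_on E S \<longleftrightarrow>
     (\<forall>u\<in>S. \<forall>v\<in>S. (\<lambda>x y. x \<in> S \<and> y \<in> S \<and> E x y)\<^sup>*\<^sup>* u v)"

definition biconnected_on :: "('a \<Rightarrow> 'a \<Rightarrow> bool) \<Rightarrow> 'a set \<Rightarrow> bool" where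
  "biconnected_on E S \<longleftrightarrow> connected_on E S \<and> (\<forall>v\<in>S. connected_on E (S - {v}))"

text \<open>A block: a maximal nonempty vertex set whose induced subgraph is connected
without cut vertex (blocks are induced subgraphs).\<close>
definition is_block :: "'a set \<Rightarrow> ('a \<Rightarrow> 'a \<Rightarrow> bool) \<Rightarrow> 'a set \<Rightarrow> bool" where
  "is_block V E B \<longleftrightarrow> B \<noteq> {} \<and> B \<subseteq> V \<and> biconnected_on E B \<and>
     (\<forall>B'. B \<subseteq> B' \<and> B' \<subseteq> V \<and> biconnected_on E B' \<longrightarrow> B' = B)"

definition is_cycle_on :: "('a \<Rightarrow> 'a \<Rightarrow> bool) \<Rightarrow> 'a set \<Rightarrow> bool" where
  "is_cycle_on E B \<longleftrightarrow> finite B \<and> card B \<ge> 3 \<and> connected_on E B \<and>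
     (\<forall>v\<in>B. card {u\<in>B. E v u} = 2)"

definition cactus :: "'a set \<Rightarrow> ('a \<Rightarrow> 'a \<Rightarrow> bool) \<Rightarrow> bool" where
  "cactus V E \<longleftrightarrow> simple_graph V E \<and>
     (\<forall>B. is_block V E B \<longrightarrow>
        is_cycle_on E B \<or> (\<exists>x y. B = {x, y} \<and> E x y) \<or> (\<exists>x. B = {x}))"

definition k_sparse :: "('a \<Rightarrow> 'a \<Rightarrow> bool) \<Rightarrow> nat \<Rightarrow> 'a set \<Rightarrow> bool" where
  "k_sparse E k S \<longleftrightarrow> (\<forall>v\<in>S. card {u\<in>S. E v u} \<le> k)"

text \<open>k-dense set: k-sparse in the complement graph.\<close>
definition k_dense :: "('a \<Rightarrow> 'a \<Rightarrow> bool) \<Rightarrow> nat \<Rightarrow> 'a set \<Rightarrow> bool" where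
  "k_dense E k S \<longleftrightarrow> (\<forall>v\<in>S. card {u\<in>S. u \<noteq> v \<and> \<not> E v u} \<le> k)"

text \<open>R_k^C(i,j) for a graph class C (an isomorphism-invariant predicate);
graphs on n vertices are taken with vertex set {0..<n}.\<close>
definition ramsey_class ::
  "(nat set \<Rightarrow> (nat \<Rightarrow> nat \<Rightarrow> bool) \<Rightarrow> bool) \<Rightarrow> nat \<Rightarrow> nat \<Rightarrow> nat \<Rightarrow> nat" where
  "ramsey_class C k i j = (LEAST n. \<forall>E. simple_graph {..<n} E \<and> C {..<n} E \<longrightarrow>
      (\<exists>S\<subseteq>{..<n}. card S = i \<and> k_dense E k S) \<or>
      (\<exists>S\<subseteq>{..<n}. card S = j \<and> k_sparse E k S))"

end

theory Submission
  imports Defs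
begin

text \<open>In a cactus a vertex has at most two neighbours in any connected vertex set avoiding
it: otherwise the vertex together with a minimal such set would be biconnected without
being a cycle. Hence, if some vertex has degree above \<open>k\<close>, a vertex of high degree in a
deepest branch of the block structure yields a vertex \<open>x\<close> and a set \<open>W \<ni> x\<close> of at least
\<open>k + 1\<close> vertices such that after deleting \<open>x\<close> all vertices of \<open>W - {x}\<close> and their
neighbours outside \<open>W\<close> have degree at most \<open>k\<close>. Removing \<open>W\<close> and inducting, every cactus on \<open>n\<close>
vertices has a \<open>k\<close>-sparse set of size \<open>n - (n - 1) div (k + 1)\<close>.

Conversely, in a chain of 4-cycles through hubs, each hub carrying \<open>k - 2\<close> pendant
vertices, the hubs have degree \<open>k + 2\<close> and are pairwise non-adjacent while all other
vertices have degree at most 2. So there is no \<open>k\<close>-dense set of \<open>k + 4\<close> vertices, and a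
\<open>k\<close>-sparse set misses on average one vertex in every \<open>k + 1\<close> consecutive ones.\<close>

section \<open>Reachability inside a vertex set\<close>

definition reachable_in :: "('a \<Rightarrow> 'a \<Rightarrow> bool) \<Rightarrow> 'a set \<Rightarrow> 'a \<Rightarrow> 'a \<Rightarrow> bool" where
  "reachable_in E X = (\<lambda>x y. x \<in> X \<and> y \<in> X \<and> E x y)\<^sup>*\<^sup>*"

definition component_in :: "('a \<Rightarrow> 'a \<Rightarrow> bool) \<Rightarrow> 'a set \<Rightarrow> 'a \<Rightarrow> 'a set" where
  "component_in E X a = {w \<in> X. reachable_in E X a w}"

lemma connected_on_iff_reachable_in:
  "connected_on E S \<longleftrightarrow> (\<forall>u\<in>S. \<forall>v\<in>S. reachable_in E S u v)"
  unfolding connected_on_def reachable_in_def by simp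

lemma reachable_in_refl [simp]: "reachable_in E X a a"
  unfolding reachable_in_def by simp

lemma reachable_in_edge: "x \<in> X \<Longrightarrow> y \<in> X \<Longrightarrow> E x y \<Longrightarrow> reachable_in E X x y"
  unfolding reachable_in_def by (simp add: r_into_rtranclp)

lemma reachable_in_trans:
  "reachable_in E X a b \<Longrightarrow> reachable_in E X b c \<Longrightarrow> reachable_in E X a c"
  unfolding reachable_in_def by (rule rtranclp_trans)

lemma reachable_in_mono: "reachable_in E X a b \<Longrightarrow> X \<subseteq> Y \<Longrightarrow> reachable_in E Y a b"
  unfolding reachable_in_def by (erule rtranclp_mono[THEN predicate2D, rotated]) auto

lemma reachable_in_sym: "symp E \<Longrightarrow> reachable_in E X a b \<Longrightarrow> reachable_in E X b a"
  unfolding reachable_in_def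
  by (rule sympD[OF symp_rtranclp]) (auto intro: sympI dest: sympD)

lemma reachable_in_target: "reachable_in E X a b \<Longrightarrow> a \<noteq> b \<Longrightarrow> b \<in> X"
  unfolding reachable_in_def by (induction rule: rtranclp_induct) auto

lemma reachable_in_source: "reachable_in E X a b \<Longrightarrow> a \<noteq> b \<Longrightarrow> a \<in> X"
  unfolding reachable_in_def by (induction rule: converse_rtranclp_induct) auto

lemma reachable_in_crosses:
  assumes "reachable_in E X a b" "a \<in> A" "b \<notin> A"
  obtains s t where "s \<in> A" "t \<notin> A" "s \<in> X" "t \<in> X" "E s t"
proof -
  have "\<exists>s t. s \<in> A \<and> t \<notin> A \<and> s \<in> X \<and> t \<in> X \<and> E s t"
    using assms unfolding reachable_in_def by (induction rule: rtranclp_induct) auto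
  then show ?thesis using that by blast
qed

lemma reachable_in_neighbour:
  assumes "reachable_in E X a b" "a \<noteq> b"
  obtains t where "t \<in> X" "t \<noteq> a" "E a t"
  using reachable_in_crosses[OF assms(1), of "{a}"] assms(2) by auto

lemma reachable_in_restrict:
  assumes "reachable_in E X a b" "\<And>y. reachable_in E X a y \<Longrightarrow> y \<in> Y"
  shows "reachable_in E (X \<inter> Y) a b"
  using assms unfolding reachable_in_def
proof (induction rule: rtranclp_induct)
  case (step y z)
  have "y \<in> Y" using step.prems step.hyps(1) by blast
  moreover have "z \<in> Y" using step.prems rtranclp.rtrancl_into_rtrancl[OF step.hyps] by blast
  ultimately show ?case
    using rtranclp.rtrancl_into_rtrancl[OF step.IH[OF step.prems]] step.hyps(2) by simp
qed simp

lemma reachable_in_cong: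
  assumes "\<And>x y. x \<in> X \<Longrightarrow> y \<in> X \<Longrightarrow> E x y = E' x y"
  shows "reachable_in E X = reachable_in E' X"
proof -
  have "(\<lambda>x y. x \<in> X \<and> y \<in> X \<and> E x y) = (\<lambda>x y. x \<in> X \<and> y \<in> X \<and> E' x y)"
    using assms by (intro ext) auto
  then show ?thesis unfolding reachable_in_def by simp
qed

lemma connected_on_cong:
  "(\<And>x y. x \<in> X \<Longrightarrow> y \<in> X \<Longrightarrow> E x y = E' x y) \<Longrightarrow> connected_on E X = connected_on E' X"
  using reachable_in_cong[of X E E'] unfolding connected_on_iff_reachable_in by simp

lemma biconnected_on_cong:
  assumes "\<And>x y. x \<in> X \<Longrightarrow> y \<in> X \<Longrightarrow> E x y = E' x y"
  shows "biconnected_on E X = biconnected_on E' X"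
proof -
  have "connected_on E (X - {v}) = connected_on E' (X - {v})" for v
    by (rule connected_on_cong) (use assms in auto)
  then show ?thesis
    unfolding biconnected_on_def using connected_on_cong[of X E E'] assms by simp
qed

lemma is_cycle_on_cong:
  assumes "\<And>x y. x \<in> X \<Longrightarrow> y \<in> X \<Longrightarrow> E x y = E' x y"
  shows "is_cycle_on E X = is_cycle_on E' X"
proof -
  have "v \<in> X \<Longrightarrow> {u\<in>X. E v u} = {u\<in>X. E' v u}" for v using assms by auto
  then show ?thesis unfolding is_cycle_on_def using connected_on_cong[of X E E'] assms by auto
qed

lemma connected_on_if_reachable_center:
  assumes "symp E" "\<And>w. w \<in> S \<Longrightarrow> reachable_in E S w c"
  shows "connected_on E S"
  unfolding connected_on_iff_reachable_in
  using reachable_in_trans[OF assms(2) reachable_in_sym[OF assms(1) assms(2)]] by blast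

lemma reachable_in_component:
  assumes "reachable_in E X a w"
  shows "reachable_in E (component_in E X a) a w"
proof (cases "a = w")
  case False
  with assms have "a \<in> X" by (rule reachable_in_source)
  then have "reachable_in E (X \<inter> component_in E X a) a w"
    by (intro reachable_in_restrict[OF assms])
      (auto simp: component_in_def dest: reachable_in_target)
  then show ?thesis by (simp add: component_in_def Int_absorb1)
qed simp

lemma connected_on_component_in:
  assumes "symp E"
  shows "connected_on E (component_in E X a)"
proof (rule connected_on_if_reachable_center[OF assms])
  fix w assume "w \<in> component_in E X a"
  then show "reachable_in E (component_in E X a) w a"
    using reachable_in_sym[OF assms reachable_in_component] by (simp add: component_in_def)
qed

lemma component_in_disjoint:
  assumes "symp E" "y \<notin> component_in E X u"
  shows "component_in E X y \<inter> component_in E X u = {}"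
proof (rule ccontr)
  assume "component_in E X y \<inter> component_in E X u \<noteq> {}"
  then obtain w where w: "w \<in> X" "reachable_in E X y w" "reachable_in E X u w"
    by (auto simp: component_in_def)
  then have "y \<in> X" by (cases "y = w") (auto dest: reachable_in_source)
  moreover have "reachable_in E X u y"
    using reachable_in_trans[OF w(3) reachable_in_sym[OF assms(1) w(2)]] .
  ultimately show False using assms(2) by (simp add: component_in_def)
qed

lemma connected_on_Diff_component:
  assumes "symp E" "connected_on E M" "x \<in> M"
  shows "connected_on E (M - component_in E (M - {x}) u)" (is "connected_on E (M - ?C)")
proof (rule connected_on_if_reachable_center[OF assms(1), where c = x])
  fix y assume y: "y \<in> M - ?C"
  show "reachable_in E (M - ?C) y x"
  proof (cases "y = x")
    case False
    let ?Cy = "component_in E (M - {x}) y"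
    have yCy: "y \<in> ?Cy" using y False by (simp add: component_in_def)
    have "reachable_in E M y x" using assms(2,3) y unfolding connected_on_iff_reachable_in by blast
    moreover have "x \<notin> ?Cy" by (simp add: component_in_def)
    ultimately obtain s t where st: "s \<in> ?Cy" "t \<notin> ?Cy" "s \<in> M" "t \<in> M" "E s t"
      by (rule reachable_in_crosses[OF _ yCy])
    have "t = x"
    proof (rule ccontr)
      assume "t \<noteq> x"
      with st have "reachable_in E (M - {x}) s t" by (intro reachable_in_edge) (auto simp: component_in_def)
      with st(1) \<open>t \<noteq> x\<close> \<open>t \<in> M\<close> have "t \<in> ?Cy"
        by (auto simp: component_in_def intro: reachable_in_trans)
      with st(2) show False ..
    qed
    have disjoint: "?Cy \<inter> ?C = {}" using component_in_disjoint[OF assms(1)] y by blast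
    have "reachable_in E ?Cy y s"
      using connected_on_component_in[OF assms(1)] yCy st(1) unfolding connected_on_iff_reachable_in by blast
    then have "reachable_in E (M - ?C) y s"
      by (rule reachable_in_mono) (use disjoint in \<open>auto simp: component_in_def\<close>)
    moreover have "reachable_in E (M - ?C) s x"
      using st disjoint \<open>t = x\<close> by (intro reachable_in_edge) (auto simp: component_in_def)
    ultimately show ?thesis by (rule reachable_in_trans)
  qed simp
qed

lemma biconnected_on_insert:
  assumes "symp E" "connected_on E M" "a \<in> M" "E v a" "v \<notin> M"
    and "\<And>x u. x \<in> M \<Longrightarrow> u \<in> M - {x} \<Longrightarrow> \<exists>b. reachable_in E (M - {x}) u b \<and> E v b"
  shows "biconnected_on E (insert v M)"
  unfolding biconnected_on_def
proof (intro conjI ballI)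
  have "reachable_in E (insert v M) w v" if "w \<in> M" for w
  proof -
    have "reachable_in E M w a" using assms(2,3) that unfolding connected_on_iff_reachable_in by blast
    then have "reachable_in E (insert v M) w a" by (rule reachable_in_mono) auto
    moreover have "reachable_in E (insert v M) a v"
      using assms(1,3,4) by (intro reachable_in_edge) (auto dest: sympD)
    ultimately show ?thesis by (rule reachable_in_trans)
  qed
  then show "connected_on E (insert v M)"
    by (intro connected_on_if_reachable_center[OF assms(1), where c = v]) auto
next
  fix x assume x: "x \<in> insert v M"
  show "connected_on E (insert v M - {x})"
  proof (cases "x = v")
    case True
    then show ?thesis using assms(2,5) by simp
  next
    case False
    have "reachable_in E (insert v M - {x}) u v" if u: "u \<in> M - {x}" for u
    proof -
      obtain b where b: "reachable_in E (M - {x}) u b" "E v b" using assms(6) x False u by blast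
      have "b \<in> M - {x}" using b(1) u by (cases "u = b") (auto dest: reachable_in_target)
      then have "reachable_in E (insert v M - {x}) b v"
        using b(2) False assms(1) by (intro reachable_in_edge) (auto dest: sympD)
      moreover have "reachable_in E (insert v M - {x}) u b" using b(1) by (rule reachable_in_mono) auto
      ultimately show ?thesis by (rule reachable_in_trans[rotated])
    qed
    then show ?thesis
      by (intro connected_on_if_reachable_center[OF assms(1), where c = v]) auto
  qed
qed

section \<open>Cacti\<close>

text \<open>Unlike the block condition in the definition of a cactus, this property passes to
subsets of the vertex set.\<close>

definition biconnected_cycles :: "('a \<Rightarrow> 'a \<Rightarrow> bool) \<Rightarrow> 'a set \<Rightarrow> bool" where
  "biconnected_cycles E V \<longleftrightarrow>
     (\<forall>B. B \<subseteq> V \<and> biconnected_on E B \<and> 3 \<le> card B \<longrightarrow> is_cycle_on E B)"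

lemma biconnected_cycles_subset:
  "biconnected_cycles E V \<Longrightarrow> U \<subseteq> V \<Longrightarrow> biconnected_cycles E U"
  unfolding biconnected_cycles_def by blast

lemma biconnected_on_degree_ge_2:
  assumes "biconnected_on E B" "finite B" "3 \<le> card B" "x \<in> B"
  shows "2 \<le> card {u\<in>B. E x u}"
proof -
  have conn: "connected_on E B" and conn_minus: "\<And>v. v \<in> B \<Longrightarrow> connected_on E (B - {v})"
    using assms(1) unfolding biconnected_on_def by auto
  have "card (B - {x}) \<ge> 2" using assms(2-4) by simp
  then have "B - {x} \<noteq> {}" by (metis card.empty not_numeral_le_zero)
  then obtain y where y: "y \<in> B" "x \<noteq> y" by blast
  have "reachable_in E B x y" using conn assms(4) y unfolding connected_on_iff_reachable_in by blast
  then obtain u1 where u1: "u1 \<in> B" "u1 \<noteq> x" "E x u1" using y(2) by (rule reachable_in_neighbour)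
  obtain w where w: "w \<in> B" "x \<noteq> w" "w \<noteq> u1"
  proof -
    have "card (B - {x, u1}) \<ge> 1" using assms(2-4) u1 by (simp add: card_Diff_subset)
    then have "B - {x, u1} \<noteq> {}" by (metis card.empty not_one_le_zero)
    then show ?thesis using that by blast
  qed
  have "reachable_in E (B - {u1}) x w"
    using conn_minus[OF u1(1)] assms(4) w u1 unfolding connected_on_iff_reachable_in by blast
  then obtain u2 where u2: "u2 \<in> B - {u1}" "u2 \<noteq> x" "E x u2" using w(2) by (rule reachable_in_neighbour)
  have "card {u1, u2} \<le> card {u\<in>B. E x u}" using assms(2) u1 u2 by (intro card_mono) auto
  moreover have "card {u1, u2} = 2" using u2 by auto
  ultimately show ?thesis by simp
qed

lemma biconnected_subset_block:
  assumes "finite V" "B \<subseteq> V" "biconnected_on E B" "B \<noteq> {}"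
  obtains B' where "is_block V E B'" "B \<subseteq> B'"
proof -
  let ?F = "{B'. B \<subseteq> B' \<and> B' \<subseteq> V \<and> biconnected_on E B'}"
  have "?F \<subseteq> Pow V" by auto
  then have finF: "finite ?F" using assms(1) finite_subset by blast
  have "B \<in> ?F" using assms by auto
  then have "Max (card ` ?F) \<in> card ` ?F" using finF by (intro Max_in) auto
  then obtain Bm where Bm: "Bm \<in> ?F" "card Bm = Max (card ` ?F)" by auto
  have max: "card B' \<le> card Bm" if "B' \<in> ?F" for B' using Bm(2) finF that by simp
  have "is_block V E Bm"
    unfolding is_block_def
  proof (intro conjI allI impI)
    show "Bm \<noteq> {}" "Bm \<subseteq> V" "biconnected_on E Bm" using Bm assms(4) by auto
    fix B' assume B': "Bm \<subseteq> B' \<and> B' \<subseteq> V \<and> biconnected_on E B'"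
    then have "card B' \<le> card Bm" using Bm by (intro max) auto
    moreover have "finite B'" using B' assms(1) finite_subset by blast
    ultimately show "B' = Bm" using B' by (metis card_seteq)
  qed
  then show ?thesis using Bm that by blast
qed

lemma cactus_biconnected_cycles:
  assumes "cactus V E"
  shows "biconnected_cycles E V"
  unfolding biconnected_cycles_def
proof (intro allI impI)
  fix B assume B: "B \<subseteq> V \<and> biconnected_on E B \<and> 3 \<le> card B"
  have finV: "finite V" using assms unfolding cactus_def simple_graph_def by auto
  have finB: "finite B" using B finV finite_subset by blast
  have "B \<noteq> {}" using B by auto
  then obtain Bs where Bs: "is_block V E Bs" "B \<subseteq> Bs"
    using biconnected_subset_block[OF finV] B by metis
  have finBs: "finite Bs" using Bs(1) finV unfolding is_block_def using finite_subset by blast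
  have "3 \<le> card Bs" using B card_mono[OF finBs Bs(2)] by simp
  then have "Bs \<noteq> {x, y}" "Bs \<noteq> {x}" for x y
    by (auto simp: card_insert_if split: if_splits)
  then have cycle: "is_cycle_on E Bs" using assms Bs(1) unfolding cactus_def by blast
  have "B = Bs"
  proof (rule ccontr)
    assume "B \<noteq> Bs"
    then obtain w where w: "w \<in> Bs" "w \<notin> B" using Bs(2) by blast
    obtain b where b: "b \<in> B" using \<open>B \<noteq> {}\<close> by blast
    have "reachable_in E Bs b w"
      using cycle b w Bs(2) unfolding is_cycle_on_def connected_on_iff_reachable_in by blast
    then obtain s t where st: "s \<in> B" "t \<notin> B" "s \<in> Bs" "t \<in> Bs" "E s t"
      by (rule reachable_in_crosses[OF _ b w(2)])
    have "2 \<le> card {u\<in>B. E s u}" using biconnected_on_degree_ge_2[OF _ finB _ st(1)] B by blast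
    moreover have "card (insert t {u\<in>B. E s u}) \<le> card {u\<in>Bs. E s u}"
      using st Bs(2) finBs by (intro card_mono) auto
    moreover have "card (insert t {u\<in>B. E s u}) = Suc (card {u\<in>B. E s u})"
      using st(2) finB by simp
    moreover have "card {u\<in>Bs. E s u} = 2" using cycle st(3) unfolding is_cycle_on_def by blast
    ultimately show False by linarith
  qed
  then show "is_cycle_on E B" using cycle by simp
qed

lemma biconnected_cycles_cactus:
  assumes "simple_graph V E" "biconnected_cycles E V"
  shows "cactus V E"
  unfolding cactus_def
proof (intro conjI allI impI)
  fix B assume "is_block V E B"
  then have B: "B \<noteq> {}" "B \<subseteq> V" "biconnected_on E B" unfolding is_block_def by auto
  have finB: "finite B" using B assms(1) finite_subset unfolding simple_graph_def by blast
  then have "card B \<ge> 1" using B by (simp add: Suc_leI card_gt_0_iff)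
  then consider "card B = 1" | "card B = 2" | "3 \<le> card B" by linarith
  then show "is_cycle_on E B \<or> (\<exists>x y. B = {x, y} \<and> E x y) \<or> (\<exists>x. B = {x})"
  proof cases
    case 1
    then show ?thesis by (auto simp: card_1_singleton_iff)
  next
    case 2
    then obtain x y where xy: "B = {x, y}" "x \<noteq> y" by (auto simp: card_2_iff)
    have "reachable_in E B x y"
      using B(3) xy unfolding biconnected_on_def connected_on_iff_reachable_in by auto
    then obtain t where "t \<in> B" "t \<noteq> x" "E x t" using xy(2) by (rule reachable_in_neighbour)
    then show ?thesis using xy by auto
  next
    case 3
    then show ?thesis using assms(2) B unfolding biconnected_cycles_def by auto
  qed
qed (use assms in simp)

lemma biconnected_cycles_neighbours_in_connected:
  assumes "symp E" "finite V" "biconnected_cycles E V" "v \<in> V"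
    and "K \<subseteq> V - {v}" "connected_on E K"
  shows "card {a\<in>K. E v a} \<le> 2"
proof (rule ccontr)
  let ?P = "\<lambda>M. M \<subseteq> V - {v} \<and> connected_on E M \<and> 3 \<le> card {a\<in>M. E v a}"
  assume "\<not> ?thesis"
  then have "?P K" using assms(5,6) by simp
  then obtain M where M: "?P M" and min: "\<And>M'. ?P M' \<Longrightarrow> card M \<le> card M'"
    using ex_has_least_nat[of ?P K card] by blast
  have finM: "finite M" using M assms(2) finite_subset by blast
  obtain a where a: "a \<in> M" "E v a"
  proof -
    have "{a\<in>M. E v a} \<noteq> {}" using M by (metis card.empty not_numeral_le_zero)
    then show ?thesis using that by blast
  qed
  have "\<exists>b. reachable_in E (M - {x}) u b \<and> E v b" if x: "x \<in> M" and u: "u \<in> M - {x}" for x u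
  proof (rule ccontr)
    let ?C = "component_in E (M - {x}) u"
    assume "\<not> ?thesis"
    then have "{a\<in>M - ?C. E v a} = {a\<in>M. E v a}" by (auto simp: component_in_def)
    moreover have "connected_on E (M - ?C)" using M x by (intro connected_on_Diff_component[OF assms(1)]) auto
    ultimately have "card M \<le> card (M - ?C)" using M by (intro min) auto
    moreover have "u \<in> ?C" using u by (simp add: component_in_def)
    moreover have "card (M - ?C) < card M" using finM u \<open>u \<in> ?C\<close> by (intro psubset_card_mono) auto
    ultimately show False by simp
  qed
  then have "biconnected_on E (insert v M)"
    using M a by (intro biconnected_on_insert[OF assms(1)]) auto
  moreover have "3 \<le> card (insert v M)"
    using M finM card_mono[OF finM, of "{a\<in>M. E v a}"] by (simp add: card_insert_if)
  ultimately have "is_cycle_on E (insert v M)" using assms(3,4) M unfolding biconnected_cycles_def by blast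
  then have "card {u\<in>insert v M. E v u} = 2" unfolding is_cycle_on_def by blast
  moreover have "card {a\<in>M. E v a} \<le> card {u\<in>insert v M. E v u}" using finM by (intro card_mono) auto
  ultimately show False using M by simp
qed

lemma subset_card_2_eq:
  assumes "A \<subseteq> {p, q}" "2 \<le> card A"
  shows "A = {p, q}"
proof -
  have "card A \<le> card {p, q}" using assms(1) by (intro card_mono) auto
  moreover have "card {p, q} \<le> 2" by (simp add: card_insert_le_m1)
  ultimately show ?thesis using assms by (intro card_subset_eq) auto
qed

lemma is_cycle_on_4:
  assumes "symp E" "irreflp E" "distinct [a, b, c, d]"
    and "E a b" "E b c" "E c d" "E d a" "\<not> E a c" "\<not> E b d"
  shows "is_cycle_on E {a, b, c, d}"
proof -
  let ?C = "{a, b, c, d}"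
  have E: "E a b" "E b a" "E b c" "E c b" "E c d" "E d c" "E d a" "E a d"
    using assms(4-7) sympD[OF assms(1)] by blast+
  have nonE: "\<not> E a c" "\<not> E c a" "\<not> E b d" "\<not> E d b" "\<not> E x x" for x
    using assms(8,9) sympD[OF assms(1)] irreflpD[OF assms(2)] by blast+
  have "reachable_in E ?C w a" if "w \<in> ?C" for w
  proof -
    have "reachable_in E ?C x y" if "x \<in> ?C" "y \<in> ?C" "E x y" for x y
      using that by (rule reachable_in_edge)
    then have "reachable_in E ?C b a" "reachable_in E ?C c b" "reachable_in E ?C d a"
      using E by auto
    then show ?thesis using that reachable_in_trans by auto
  qed
  then have "connected_on E ?C" by (rule connected_on_if_reachable_center[OF assms(1)])
  moreover have "card {u\<in>?C. E v u} = 2" if "v \<in> ?C" for v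
  proof -
    have "{u\<in>?C. E v u} = (if v = a \<or> v = c then {b, d} else {a, c})"
      using that E nonE assms(3) by auto
    then show ?thesis using assms(3) by auto
  qed
  ultimately show ?thesis unfolding is_cycle_on_def using assms(3) by auto
qed

section \<open>Degrees, sparse and dense sets\<close>

definition neighbours :: "('a \<Rightarrow> 'a \<Rightarrow> bool) \<Rightarrow> 'a set \<Rightarrow> 'a \<Rightarrow> 'a set" where
  "neighbours E V u = {w \<in> V. E u w}"

definition degree :: "('a \<Rightarrow> 'a \<Rightarrow> bool) \<Rightarrow> 'a set \<Rightarrow> 'a \<Rightarrow> nat" where
  "degree E V u = card (neighbours E V u)"

lemma k_sparse_iff_degree: "k_sparse E k S \<longleftrightarrow> (\<forall>v\<in>S. degree E S v \<le> k)"
  unfolding k_sparse_def degree_def neighbours_def by simp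

lemma degree_mono: "finite V \<Longrightarrow> U \<subseteq> V \<Longrightarrow> degree E U u \<le> degree E V u"
  unfolding degree_def neighbours_def by (intro card_mono) auto

lemma degree_Diff_neighbour:
  assumes "finite V" "x \<in> V" "E u x"
  shows "degree E (V - {x}) u = degree E V u - 1"
proof -
  have "neighbours E (V - {x}) u = neighbours E V u - {x}" "x \<in> neighbours E V u"
    using assms unfolding neighbours_def by auto
  then show ?thesis unfolding degree_def using assms(1) by (simp add: neighbours_def)
qed

lemma k_sparse_subset:
  assumes "k_sparse E k S" "T \<subseteq> S" "finite S"
  shows "k_sparse E k T"
  unfolding k_sparse_def
proof
  fix v assume "v \<in> T"
  have "card {u \<in> T. E v u} \<le> card {u \<in> S. E v u}" using assms(2,3) by (intro card_mono) auto
  also have "\<dots> \<le> k" using assms(1,2) \<open>v \<in> T\<close> unfolding k_sparse_def by blast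
  finally show "card {u \<in> T. E v u} \<le> k" .
qed

lemma k_dense_card_le:
  assumes "k_dense E k S" "finite S" "v \<in> S"
  shows "card S \<le> k + 1 + card {u\<in>S. E v u}"
proof -
  have "S - {v} \<subseteq> {u\<in>S. u \<noteq> v \<and> \<not> E v u} \<union> {u\<in>S. E v u}" by auto
  then have "card (S - {v}) \<le> card ({u\<in>S. u \<noteq> v \<and> \<not> E v u} \<union> {u\<in>S. E v u})"
    using assms(2) by (intro card_mono) auto
  also have "\<dots> \<le> card {u\<in>S. u \<noteq> v \<and> \<not> E v u} + card {u\<in>S. E v u}" by (rule card_Un_le)
  finally have "card (S - {v}) \<le> card {u\<in>S. u \<noteq> v \<and> \<not> E v u} + card {u\<in>S. E v u}" .
  moreover have "card {u\<in>S. u \<noteq> v \<and> \<not> E v u} \<le> k" using assms(1,3) unfolding k_dense_def by blast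
  ultimately show ?thesis using assms(2,3) by simp
qed

lemma k_sparse_card_outside:
  assumes "k_sparse E k S" "finite S" "h \<in> S" "finite A" "\<And>y. y \<in> A \<Longrightarrow> E h y"
  shows "card A \<le> k + card (A - S)"
proof -
  have "card (A \<inter> S) \<le> card {u\<in>S. E h u}" using assms(2,5) by (intro card_mono) auto
  also have "\<dots> \<le> k" using assms(1,3) unfolding k_sparse_def by blast
  finally have "card (A \<inter> S) \<le> k" .
  moreover have "card A = card (A \<inter> S) + card (A - S)" using assms(4) by (rule card_Int_Diff)
  ultimately show ?thesis by linarith
qed

section \<open>Large sparse sets in cacti\<close>

definition reducible :: "('a \<Rightarrow> 'a \<Rightarrow> bool) \<Rightarrow> 'a set \<Rightarrow> nat \<Rightarrow> 'a \<Rightarrow> 'a set \<Rightarrow> bool" where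
  "reducible E V k x W \<longleftrightarrow> x \<in> W \<and> W \<subseteq> V \<and> k + 1 \<le> card W \<and>
     (\<forall>u \<in> W - {x}. degree E (V - {x}) u \<le> k) \<and>
     (\<forall>u \<in> V - W. (\<exists>w \<in> W - {x}. E u w) \<longrightarrow> degree E (V - {x}) u \<le> k)"

lemma reducible_insertI:
  assumes "finite V" "x \<in> V" "H \<subseteq> V - {x}" "k \<le> card H"
    and "\<And>w. w \<in> H \<Longrightarrow> degree E (V - {x}) w \<le> k"
    and "\<And>w y. w \<in> H \<Longrightarrow> y \<in> V - insert x H \<Longrightarrow> E y w \<Longrightarrow> degree E (V - {x}) y \<le> k"
  shows "reducible E V k x (insert x H)"
  unfolding reducible_def
proof (intro conjI ballI impI)
  show "x \<in> insert x H" by simp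
  show "insert x H \<subseteq> V" using assms(2,3) by auto
  have "finite H" "x \<notin> H" using assms(1,3) finite_subset by auto
  then show "k + 1 \<le> card (insert x H)" using assms(4) by simp
next
  fix u assume "u \<in> insert x H - {x}"
  then show "degree E (V - {x}) u \<le> k" using assms(5) by simp
next
  fix u assume "u \<in> V - insert x H" "\<exists>w\<in>insert x H - {x}. E u w"
  then show "degree E (V - {x}) u \<le> k" using assms(6) by blast
qed

lemma reducible_sparse_extend:
  assumes "finite V" "reducible E V k x W" "S \<subseteq> V - W" "k_sparse E k S"
  shows "k_sparse E k (S \<union> (W - {x}))"
  unfolding k_sparse_iff_degree
proof
  fix u assume u: "u \<in> S \<union> (W - {x})"
  show "degree E (S \<union> (W - {x})) u \<le> k"
  proof (cases "u \<in> W - {x} \<or> (\<exists>w \<in> W - {x}. E u w)")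
    case True
    have "degree E (S \<union> (W - {x})) u \<le> degree E (V - {x}) u"
      using assms(1-3) unfolding reducible_def by (intro degree_mono) auto
    also have "\<dots> \<le> k" using True assms(2,3) u unfolding reducible_def by blast
    finally show ?thesis .
  next
    case False
    then have "neighbours E (S \<union> (W - {x})) u = neighbours E S u" by (auto simp: neighbours_def)
    then show ?thesis using False u assms(4) unfolding k_sparse_iff_degree degree_def by auto
  qed
qed

text \<open>The vertices that \<open>u\<close> separates from \<open>p\<close>.\<close>

definition hanging :: "('a \<Rightarrow> 'a \<Rightarrow> bool) \<Rightarrow> 'a set \<Rightarrow> 'a \<Rightarrow> 'a \<Rightarrow> 'a set" where
  "hanging E V p u = {w. \<exists>a \<in> V - {u}. E u a \<and> \<not> reachable_in E (V - {u}) a p \<and>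
     w \<in> component_in E (V - {u}) a}"

lemma hanging_subset: "hanging E V p u \<subseteq> V - {u}"
  unfolding hanging_def component_in_def by auto

lemma finite_hanging: "finite V \<Longrightarrow> finite (hanging E V p u)"
  by (rule finite_subset[OF hanging_subset]) simp

lemma hanging_closed:
  assumes "w \<in> hanging E V p u" "y \<in> V" "E w y"
  shows "y = u \<or> y \<in> hanging E V p u"
proof (cases "y = u")
  case False
  obtain a where a: "a \<in> V - {u}" "E u a" "\<not> reachable_in E (V - {u}) a p"
      "w \<in> component_in E (V - {u}) a"
    using assms(1) unfolding hanging_def by blast
  then have w: "reachable_in E (V - {u}) a w" "w \<in> V - {u}" by (auto simp: component_in_def)
  have "reachable_in E (V - {u}) w y"
    using assms(2,3) False w(2) by (intro reachable_in_edge) auto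
  with w(1) have "reachable_in E (V - {u}) a y" by (rule reachable_in_trans)
  then have "y \<in> component_in E (V - {u}) a" using assms(2) False by (simp add: component_in_def)
  then show ?thesis using a(1-3) unfolding hanging_def by blast
qed simp

lemma neighbour_hanging_or_component:
  assumes "symp E" "irreflp E" "E u a" "a \<in> V"
  shows "a \<in> hanging E V p u \<or> a \<in> component_in E (V - {u}) p"
proof -
  have "a \<noteq> u" using assms(2,3) by (auto dest: irreflpD)
  show ?thesis
  proof (cases "reachable_in E (V - {u}) a p")
    case True
    then show ?thesis
      using \<open>a \<noteq> u\<close> assms(4) reachable_in_sym[OF assms(1) True] by (simp add: component_in_def)
  next
    case False
    then show ?thesis using \<open>a \<noteq> u\<close> assms(3,4) unfolding hanging_def component_in_def by auto
  qed
qed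

lemma hanging_component_disjoint:
  assumes "symp E"
  shows "hanging E V p u \<inter> component_in E (V - {u}) p = {}"
proof (rule ccontr)
  assume "hanging E V p u \<inter> component_in E (V - {u}) p \<noteq> {}"
  then obtain w a where "reachable_in E (V - {u}) a w" "\<not> reachable_in E (V - {u}) a p"
      "reachable_in E (V - {u}) p w"
    unfolding hanging_def component_in_def by blast
  then show False using reachable_in_trans[OF _ reachable_in_sym[OF assms]] by blast
qed

lemma card_neighbours_component_le_2:
  assumes "symp E" "finite V" "biconnected_cycles E V" "u \<in> V"
  shows "card (neighbours E V u \<inter> component_in E (V - {u}) p) \<le> 2"
proof -
  have "card {a \<in> component_in E (V - {u}) p. E u a} \<le> 2"
    by (rule biconnected_cycles_neighbours_in_connected[OF assms _ connected_on_component_in[OF assms(1)]])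
      (auto simp: component_in_def)
  moreover have "neighbours E V u \<inter> component_in E (V - {u}) p = {a \<in> component_in E (V - {u}) p. E u a}"
    unfolding neighbours_def component_in_def by auto
  ultimately show ?thesis by simp
qed

lemma degree_le_neighbours_split:
  assumes "symp E" "irreflp E" "finite V" "u \<in> V"
  shows "degree E V u \<le> card (neighbours E V u \<inter> hanging E V p u) +
    card (neighbours E V u \<inter> component_in E (V - {u}) p)"
proof -
  have "neighbours E V u \<subseteq> (neighbours E V u \<inter> hanging E V p u) \<union>
      (neighbours E V u \<inter> component_in E (V - {u}) p)"
    using neighbour_hanging_or_component[OF assms(1,2)] unfolding neighbours_def by blast
  then have "degree E V u \<le> card ((neighbours E V u \<inter> hanging E V p u) \<union>
      (neighbours E V u \<inter> component_in E (V - {u}) p))"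
    unfolding degree_def using assms(3) by (intro card_mono) (auto simp: neighbours_def)
  also have "\<dots> \<le> card (neighbours E V u \<inter> hanging E V p u) +
      card (neighbours E V u \<inter> component_in E (V - {u}) p)"
    by (rule card_Un_le)
  finally show ?thesis .
qed

lemma degree_le_card_hanging:
  assumes "symp E" "irreflp E" "finite V" "biconnected_cycles E V" "u \<in> V"
  shows "degree E V u \<le> card (hanging E V p u) + 2"
proof -
  have "card (neighbours E V u \<inter> hanging E V p u) \<le> card (hanging E V p u)"
    using finite_hanging[OF assms(3)] by (intro card_mono) auto
  then show ?thesis
    using degree_le_neighbours_split[OF assms(1-3,5), of p]
      card_neighbours_component_le_2[OF assms(1,3-5), of p] by linarith
qed

lemma reducible_hanging:
  assumes "finite V" "symp E" "u \<in> V" "k \<le> card (hanging E V p u)"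
    and "\<And>w. w \<in> hanging E V p u \<Longrightarrow> degree E V w \<le> k"
  shows "reducible E V k u (insert u (hanging E V p u))"
proof (rule reducible_insertI[OF assms(1,3) hanging_subset assms(4)])
  fix w assume "w \<in> hanging E V p u"
  moreover have "degree E (V - {u}) w \<le> degree E V w" by (rule degree_mono[OF assms(1)]) auto
  ultimately show "degree E (V - {u}) w \<le> k" using assms(5) by fastforce
next
  fix w y assume "w \<in> hanging E V p u" "y \<in> V - insert u (hanging E V p u)" "E y w"
  then show "degree E (V - {u}) y \<le> k"
    using hanging_closed[of w E V p u y] sympD[OF assms(2)] by blast
qed

lemma high_vertex_small_hanging:
  assumes "symp E" "irreflp E" "finite V" "biconnected_cycles E V" "v \<in> V"
    and "k + 1 \<le> degree E V v" "card (hanging E V p v) < k"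
  obtains r r' where "neighbours E V v = insert r (insert r' (hanging E V p v))"
    "r \<noteq> p" "r \<notin> hanging E V p v" "r' \<notin> hanging E V p v"
    "degree E V v = k + 1" "card (hanging E V p v) = k - 1"
proof -
  let ?H = "hanging E V p v"
  let ?N = "neighbours E V v"
  let ?R = "component_in E (V - {v}) p"
  have c1: "card (?N \<inter> ?H) \<le> card ?H" using finite_hanging[OF assms(3)] by (intro card_mono) auto
  have c2: "card (?N \<inter> ?R) \<le> 2" by (rule card_neighbours_component_le_2[OF assms(1,3-5)])
  have c3: "degree E V v \<le> card (?N \<inter> ?H) + card (?N \<inter> ?R)"
    by (rule degree_le_neighbours_split[OF assms(1-3,5)])
  have NR: "card (?N \<inter> ?R) = 2" and cH: "card ?H = k - 1" and dv: "degree E V v = k + 1"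
    and "card (?N \<inter> ?H) = card ?H"
    using c1 c2 c3 assms(6,7) by linarith+
  then have NH: "?N \<inter> ?H = ?H" using finite_hanging[OF assms(3)] by (metis card_subset_eq inf_le2)
  obtain r r' where rr: "?N \<inter> ?R = {r, r'}" "r \<noteq> p"
  proof -
    obtain r1 r2 where "?N \<inter> ?R = {r1, r2}" "r1 \<noteq> r2" using NR by (auto simp: card_2_iff)
    then show ?thesis using that by (cases "r1 = p") (auto simp: insert_commute)
  qed
  have "?N = (?N \<inter> ?H) \<union> (?N \<inter> ?R)"
    using neighbour_hanging_or_component[OF assms(1,2)] unfolding neighbours_def by blast
  then have "?N = insert r (insert r' ?H)" using NH rr(1) by auto
  moreover have "r \<notin> ?H" "r' \<notin> ?H" using rr(1) hanging_component_disjoint[OF assms(1), of V p v] by auto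
  ultimately show ?thesis using that rr(2) dv cH by blast
qed

lemma reducible_delete_neighbour:
  assumes "finite V" "symp E" "irreflp E" "v \<in> V" "1 \<le> k"
    and "neighbours E V v = insert r (insert r' (hanging E V p v))" "r' \<notin> hanging E V p v"
    and "degree E V v = k + 1" "card (hanging E V p v) = k - 1"
    and "\<And>w. w \<in> hanging E V p v \<Longrightarrow> degree E V w \<le> k" "degree E V r \<le> k"
  shows "reducible E V k r' (insert r' (insert v (hanging E V p v)))"
proof -
  let ?H = "hanging E V p v"
  have r': "r' \<in> V" "E v r'" using assms(6) by (auto simp: neighbours_def)
  then have "r' \<noteq> v" using assms(3) by (auto dest: irreflpD)
  have vH: "v \<notin> ?H" using hanging_subset[of E V p v] by blast
  show ?thesis
  proof (rule reducible_insertI[OF assms(1) r'(1)])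
    show "insert v ?H \<subseteq> V - {r'}" using assms(4,7) hanging_subset[of E V p v] \<open>r' \<noteq> v\<close> by blast
    show "k \<le> card (insert v ?H)" using vH finite_hanging[OF assms(1)] assms(5,9) by simp
  next
    fix w assume "w \<in> insert v ?H"
    moreover have "degree E (V - {r'}) v = k"
      using degree_Diff_neighbour[of V r' E v] assms(1,8) r' by simp
    moreover have "degree E (V - {r'}) w \<le> degree E V w" by (rule degree_mono[OF assms(1)]) auto
    ultimately show "degree E (V - {r'}) w \<le> k" using assms(10) by fastforce
  next
    fix w y assume w: "w \<in> insert v ?H" and y: "y \<in> V - insert r' (insert v ?H)" and "E y w"
    then have "E w y" using assms(2) by (auto dest: sympD)
    have "y = r"
    proof (cases "w = v")
      case True
      then have "y \<in> neighbours E V v" using \<open>E w y\<close> y by (simp add: neighbours_def)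
      then show ?thesis using assms(6) y by blast
    next
      case False
      then show ?thesis using hanging_closed[of w E V p v y] w y \<open>E w y\<close> by blast
    qed
    moreover have "degree E (V - {r'}) r \<le> degree E V r" by (rule degree_mono[OF assms(1)]) auto
    ultimately show "degree E (V - {r'}) y \<le> k" using assms(11) by simp
  qed
qed

lemma reducible_delete_high_vertex:
  assumes "finite V" "symp E" "irreflp E" "v \<in> V" "2 \<le> k" "r \<in> V" "E v r"
    and "hanging E V p v \<subseteq> neighbours E V v" "card (hanging E V p v) = k - 1"
    and "degree E V v = k + 1" "degree E V r = k + 1" "k - 1 \<le> card (hanging E V p r)"
    and "\<And>w. w \<in> hanging E V p v \<union> hanging E V p r \<Longrightarrow> degree E V w \<le> k"
  shows "reducible E V k v (insert v (hanging E V p v \<union> hanging E V p r))"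
proof -
  let ?H = "hanging E V p v"
  let ?Hr = "hanging E V p r"
  have "r \<noteq> v" using assms(3,7) by (auto dest: irreflpD)
  have vHr: "v \<notin> ?Hr" using assms(10,13) by fastforce
  have disjoint: "?H \<inter> ?Hr = {}"
  proof (rule ccontr)
    assume "?H \<inter> ?Hr \<noteq> {}"
    then obtain w where w: "w \<in> ?H" "w \<in> ?Hr" by blast
    then have "E w v" using assms(2,8) by (auto simp: neighbours_def dest: sympD)
    then show False using hanging_closed[OF w(2) assms(4)] vHr \<open>r \<noteq> v\<close> by blast
  qed
  show ?thesis
  proof (rule reducible_insertI[OF assms(1,4)])
    show "?H \<union> ?Hr \<subseteq> V - {v}" using hanging_subset[of E V p v] hanging_subset[of E V p r] vHr by blast
    have "card (?H \<union> ?Hr) = card ?H + card ?Hr"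
      using disjoint finite_hanging[OF assms(1)] by (simp add: card_Un_disjoint)
    then show "k \<le> card (?H \<union> ?Hr)" using assms(5,9,12) by linarith
  next
    fix w assume "w \<in> ?H \<union> ?Hr"
    moreover have "degree E (V - {v}) w \<le> degree E V w" by (rule degree_mono[OF assms(1)]) auto
    ultimately show "degree E (V - {v}) w \<le> k" using assms(13) by fastforce
  next
    fix w y assume w: "w \<in> ?H \<union> ?Hr" and y: "y \<in> V - insert v (?H \<union> ?Hr)" and "E y w"
    then have "E w y" using assms(2) by (auto dest: sympD)
    then have "y = r" using hanging_closed[of w E V p v y] hanging_closed[of w E V p r y] w y by blast
    moreover have "degree E (V - {v}) r = k"
      using degree_Diff_neighbour[of V v E r] assms(1,4,11) sympD[OF assms(2,7)] by simp
    ultimately show "degree E (V - {v}) y \<le> k" by simp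
  qed
qed

lemma component_hanging_psubset:
  assumes "u \<in> component_in E (V - {p}) q" "a \<in> V - {u}" "E u a"
    and "\<not> reachable_in E (V - {u}) a p"
  shows "component_in E (V - {u}) a \<subset> component_in E (V - {p}) q"
proof
  have "a \<noteq> p" using assms(4) by auto
  have qu: "reachable_in E (V - {p}) q u" and u: "u \<in> V - {p}"
    using assms(1) by (auto simp: component_in_def)
  have ua: "reachable_in E (V - {p}) u a" using u assms(2,3) \<open>a \<noteq> p\<close> by (intro reachable_in_edge) auto
  show "component_in E (V - {u}) a \<subseteq> component_in E (V - {p}) q"
  proof
    fix z assume "z \<in> component_in E (V - {u}) a"
    then have z: "reachable_in E (V - {u}) a z" "z \<in> V - {u}" by (auto simp: component_in_def)
    have "reachable_in E ((V - {u}) \<inter> - {p}) a z"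
      by (rule reachable_in_restrict[OF z(1)]) (use assms(4) in auto)
    then have "reachable_in E (V - {p}) a z" by (rule reachable_in_mono) auto
    then have "reachable_in E (V - {p}) q z" by (rule reachable_in_trans[OF reachable_in_trans[OF qu ua]])
    moreover have "z \<noteq> p" using z(1) assms(4) by auto
    ultimately show "z \<in> component_in E (V - {p}) q" using z(2) by (simp add: component_in_def)
  qed
  show "component_in E (V - {u}) a \<noteq> component_in E (V - {p}) q"
    using assms(1) by (auto simp: component_in_def)
qed

lemma hanging_in_smaller_component:
  assumes "u \<in> component_in E (V - {p}) q" "w \<in> hanging E V p u"
  obtains a where "E u a" "w \<in> component_in E (V - {u}) a"
    "component_in E (V - {u}) a \<subset> component_in E (V - {p}) q"
  using assms component_hanging_psubset[OF assms(1)] unfolding hanging_def by blast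

text \<open>A smallest component of \<open>V - {p}\<close> at a neighbour of \<open>p\<close> that contains a vertex of
degree above \<open>k\<close> is a deepest such branch: a part hanging off one of its vertices away
from \<open>p\<close> is a smaller component of the same kind, so it has no vertex of degree above \<open>k\<close>.\<close>

lemma deepest_high_vertex:
  assumes "finite V" "symp E" "irreflp E" "u0 \<in> V" "k + 1 \<le> degree E V u0"
  obtains p Q v where "p \<in> V" "Q \<subseteq> V - {p}" "v \<in> Q" "k + 1 \<le> degree E V v"
    "\<And>u r. u \<in> Q \<Longrightarrow> r \<in> V - {p} \<Longrightarrow> E u r \<Longrightarrow> r \<in> Q"
    "\<And>u w. u \<in> Q \<Longrightarrow> w \<in> hanging E V p u \<Longrightarrow> degree E V w \<le> k"
proof -
  define cand where "cand Q \<longleftrightarrow> (\<exists>p\<in>V. \<exists>q. E p q \<and> Q = component_in E (V - {p}) q) \<and>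
    (\<exists>v\<in>Q. k + 1 \<le> degree E V v)" for Q
  have "neighbours E V u0 \<noteq> {}" using assms(5) unfolding degree_def by auto
  then obtain q0 where q0: "q0 \<in> V" "E u0 q0" unfolding neighbours_def by auto
  have "u0 \<noteq> q0" using q0(2) assms(3) by (auto dest: irreflpD)
  then have "cand (component_in E (V - {q0}) u0)"
    unfolding cand_def component_in_def using q0 assms(2,4,5) by (auto dest: sympD)
  then obtain Q where Q: "cand Q" and min: "\<And>Q'. cand Q' \<Longrightarrow> card Q \<le> card Q'"
    using ex_has_least_nat[of cand _ card] by metis
  then obtain p q v where p: "p \<in> V" "E p q" "Q = component_in E (V - {p}) q"
    and v: "v \<in> Q" "k + 1 \<le> degree E V v"
    unfolding cand_def by blast
  show ?thesis
  proof (rule that[OF p(1) _ v])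
    show "Q \<subseteq> V - {p}" using p(3) by (auto simp: component_in_def)
  next
    fix u r assume "u \<in> Q" "r \<in> V - {p}" "E u r"
    then show "r \<in> Q" using p(3) reachable_in_trans reachable_in_edge[of u "V - {p}" r E]
      by (auto simp: component_in_def)
  next
    fix u w assume u: "u \<in> Q" and w: "w \<in> hanging E V p u"
    obtain a where a: "E u a" "w \<in> component_in E (V - {u}) a" "component_in E (V - {u}) a \<subset> Q"
      using hanging_in_smaller_component[OF _ w] u p(3) by metis
    have "finite Q" using p(3) assms(1) by (simp add: component_in_def)
    then have "\<not> cand (component_in E (V - {u}) a)" using min a(3) psubset_card_mono by (meson not_le)
    moreover have "u \<in> V" using u p(3) by (simp add: component_in_def)
    ultimately have "\<not> k + 1 \<le> degree E V w" using a(1,2) unfolding cand_def by blast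
    then show "degree E V w \<le> k" by simp
  qed
qed

lemma reducible_by_neighbour_degree:
  assumes "finite V" "symp E" "irreflp E" "biconnected_cycles E V" "2 \<le> k" "v \<in> V"
    and N: "neighbours E V v = insert r (insert r' (hanging E V p v))" "r' \<notin> hanging E V p v"
    and "degree E V v = k + 1" "card (hanging E V p v) = k - 1"
    and "\<And>w. w \<in> hanging E V p v \<Longrightarrow> degree E V w \<le> k"
    and "\<And>w. w \<in> hanging E V p r \<Longrightarrow> degree E V w \<le> k"
  obtains x W where "reducible E V k x W"
proof -
  have r: "r \<in> V" "E v r" using N by (auto simp: neighbours_def)
  have deg_r: "degree E V r \<le> card (hanging E V p r) + 2"
    by (rule degree_le_card_hanging[OF assms(2,3,1,4) r(1)])
  consider "degree E V r \<le> k" | "degree E V r = k + 1" | "k + 2 \<le> degree E V r" by linarith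
  then show ?thesis
  proof cases
    case 1
    then show ?thesis
      using reducible_delete_neighbour[OF assms(1-3,6) _ N assms(9-11)] assms(5) that by fastforce
  next
    case 2
    have "hanging E V p v \<subseteq> neighbours E V v" using N by blast
    then show ?thesis
      using reducible_delete_high_vertex[OF assms(1-3,6,5) r _ assms(10,9) 2] assms(11,12) deg_r 2 that
      by fastforce
  next
    case 3
    then have "k \<le> card (hanging E V p r)" using deg_r by linarith
    then show ?thesis using reducible_hanging[OF assms(1,2) r(1) _ assms(12)] that by blast
  qed
qed

lemma exists_reducible:
  assumes "finite V" "symp E" "irreflp E" "biconnected_cycles E V" "2 \<le> k"
    and "u0 \<in> V" "k + 1 \<le> degree E V u0"
  obtains x W where "reducible E V k x W"
proof -
  obtain p Q v where pQ: "p \<in> V" "Q \<subseteq> V - {p}" "v \<in> Q" "k + 1 \<le> degree E V v"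
    and closed: "\<And>u r. u \<in> Q \<Longrightarrow> r \<in> V - {p} \<Longrightarrow> E u r \<Longrightarrow> r \<in> Q"
    and low: "\<And>u w. u \<in> Q \<Longrightarrow> w \<in> hanging E V p u \<Longrightarrow> degree E V w \<le> k"
    using deepest_high_vertex[OF assms(1-3,6,7)] by blast
  have v: "v \<in> V" using pQ by auto
  show ?thesis
  proof (cases "k \<le> card (hanging E V p v)")
    case True
    then show ?thesis using reducible_hanging[OF assms(1,2) v True low[OF pQ(3)]] that by blast
  next
    case False
    then obtain r r' where
      N: "neighbours E V v = insert r (insert r' (hanging E V p v))" "r \<noteq> p" "r' \<notin> hanging E V p v"
      and deg: "degree E V v = k + 1" "card (hanging E V p v) = k - 1"
      using high_vertex_small_hanging[OF assms(2,3,1,4) v pQ(4)] by (metis not_le)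
    have "r \<in> Q" using closed[OF pQ(3)] N(1,2) by (auto simp: neighbours_def)
    then show ?thesis
      using reducible_by_neighbour_degree[OF assms(1-5) v N(1,3) deg low[OF pQ(3)] low[OF \<open>r \<in> Q\<close>]] that
      by blast
  qed
qed

lemma sparse_bound_step:
  fixes k w n s :: nat
  assumes "k + 1 \<le> w" "w \<le> n" "k + 2 \<le> n" "n - w \<le> s + (n - w - 1) div (k + 1)"
  shows "n \<le> s + (w - 1) + (n - 1) div (k + 1)"
proof (cases "n = w")
  case True
  have "(k + 1) div (k + 1) \<le> (n - 1) div (k + 1)" using assms(3) by (intro div_le_mono) simp
  then show ?thesis using True by simp
next
  case False
  have "(n - w - 1 + (k + 1)) div (k + 1) \<le> (n - 1) div (k + 1)"
    using assms(1,2) False by (intro div_le_mono) simp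
  moreover have "(n - w - 1 + (k + 1)) div (k + 1) = (n - w - 1) div (k + 1) + 1"
    by (rule div_add_self2) simp
  ultimately show ?thesis using assms False by linarith
qed

lemma large_k_sparse_subset:
  assumes "finite V" "symp E" "irreflp E" "biconnected_cycles E V" "2 \<le> k"
  shows "\<exists>S\<subseteq>V. k_sparse E k S \<and> card V \<le> card S + (card V - 1) div (k + 1)"
  using assms(1,4)
proof (induction "card V" arbitrary: V rule: less_induct)
  case less
  show ?case
  proof (cases "\<forall>u\<in>V. degree E V u \<le> k")
    case True
    then show ?thesis unfolding k_sparse_iff_degree by auto
  next
    case False
    then obtain u0 where u0: "u0 \<in> V" "k + 1 \<le> degree E V u0" by force
    obtain x W where W: "reducible E V k x W"
      by (rule exists_reducible[OF less.prems(1) assms(2,3) less.prems(2) assms(5) u0])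
    then have x: "x \<in> W" "W \<subseteq> V" "k + 1 \<le> card W" unfolding reducible_def by auto
    have finW: "finite W" using x(2) less.prems(1) finite_subset by blast
    have "card (V - W) < card V" using x less.prems(1) by (intro psubset_card_mono) auto
    moreover have "biconnected_cycles E (V - W)"
      using less.prems(2) by (rule biconnected_cycles_subset) auto
    ultimately obtain S where S: "S \<subseteq> V - W" "k_sparse E k S"
      "card (V - W) \<le> card S + (card (V - W) - 1) div (k + 1)"
      using less.hyps less.prems(1) by blast
    have "finite S" using S(1) less.prems(1) finite_subset by blast
    then have cS: "card (S \<union> (W - {x})) = card S + (card W - 1)"
      using S(1) finW x(1) by (subst card_Un_disjoint) auto
    have "degree E V u0 \<le> card (V - {u0})"
      unfolding degree_def neighbours_def using less.prems(1) assms(3)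
      by (intro card_mono) (auto dest: irreflpD)
    then have "k + 2 \<le> card V" using u0 less.prems(1) by (simp add: card_Diff_singleton)
    moreover have "card W \<le> card V" using x(2) less.prems(1) by (rule card_mono[rotated])
    moreover have "card (V - W) = card V - card W" using x(2) finW by (simp add: card_Diff_subset)
    ultimately have "card V \<le> card S + (card W - 1) + (card V - 1) div (k + 1)"
      using sparse_bound_step[OF x(3)] S(3) by simp
    then show ?thesis
      using reducible_sparse_extend[OF less.prems(1) W S(1,2)] S(1) x(2) cS
      by (intro exI[of _ "S \<union> (W - {x})"]) auto
  qed
qed

lemma cactus_k_sparse_subset:
  assumes "cactus {..<n} E" "2 \<le> k" "j + (n - 1) div (k + 1) \<le> n"
  shows "\<exists>S\<subseteq>{..<n}. card S = j \<and> k_sparse E k S"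
proof -
  have "symp E" "irreflp E"
    using assms(1) unfolding cactus_def simple_graph_def by (auto intro: sympI irreflpI)
  then obtain S where S: "S \<subseteq> {..<n}" "k_sparse E k S" "n \<le> card S + (n - 1) div (k + 1)"
    using large_k_sparse_subset[OF finite_lessThan _ _ cactus_biconnected_cycles[OF assms(1)] assms(2)]
    by auto
  then have "j \<le> card S" using assms(3) by simp
  then obtain T where "T \<subseteq> S" "card T = j" by (meson obtain_subset_with_card_n)
  moreover have "finite S" using S(1) finite_subset by blast
  ultimately show ?thesis using k_sparse_subset[OF S(2)] S(1) by blast
qed

section \<open>A chain of 4-cycles\<close>

text \<open>The vertices are cut into blocks \<open>{m * K..<m * K + K}\<close>. The hub \<open>m * K + 2\<close> is
adjacent to the other vertices of its block and to the first two vertices \<open>(m + 1) * K\<close>,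
\<open>(m + 1) * K + 1\<close> of the next block. So consecutive hubs span a 4-cycle, and every hub
carries \<open>K - 3\<close> pendant vertices.\<close>

definition is_hub :: "nat \<Rightarrow> nat \<Rightarrow> bool" where
  "is_hub K x \<longleftrightarrow> x mod K = 2"

definition attached :: "nat \<Rightarrow> nat \<Rightarrow> nat \<Rightarrow> bool" where
  "attached K x y \<longleftrightarrow> \<not> is_hub K x \<and> is_hub K y \<and>
     (y div K = x div K \<or> (x mod K \<le> 1 \<and> x div K = Suc (y div K)))"

definition hub_chain :: "nat \<Rightarrow> nat \<Rightarrow> nat \<Rightarrow> bool" where
  "hub_chain K x y \<longleftrightarrow> attached K x y \<or> attached K y x"

definition hub_chain_on :: "nat \<Rightarrow> nat \<Rightarrow> nat \<Rightarrow> nat \<Rightarrow> bool" where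
  "hub_chain_on K n x y \<longleftrightarrow> x < n \<and> y < n \<and> hub_chain K x y"

lemma symp_hub_chain: "symp (hub_chain K)"
  unfolding hub_chain_def by (auto intro: sympI)

lemma irreflp_hub_chain: "irreflp (hub_chain K)"
  unfolding hub_chain_def attached_def by (auto intro: irreflpI)

lemma hubs_not_adjacent: "is_hub K x \<Longrightarrow> is_hub K y \<Longrightarrow> \<not> hub_chain K x y"
  unfolding hub_chain_def attached_def by auto

lemma is_hub_eq: "is_hub K y \<Longrightarrow> y = y div K * K + 2"
  unfolding is_hub_def by (metis div_mult_mod_eq)

lemma block_div_mod:
  fixes i t K :: nat
  assumes "t < K"
  shows "(i * K + t) div K = i" "(i * K + t) mod K = t"
  using assms by simp_all

lemma non_hub_neighbours:
  assumes "\<not> is_hub K x" "hub_chain K x y"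
  shows "y = x div K * K + 2 \<or> (x mod K \<le> 1 \<and> 1 \<le> x div K \<and> y = (x div K - 1) * K + 2)"
proof -
  have "attached K x y" using assms unfolding hub_chain_def attached_def by auto
  moreover from this have "y = y div K * K + 2" using is_hub_eq unfolding attached_def by blast
  ultimately show ?thesis unfolding attached_def by (metis diff_Suc_1 le_add1 plus_1_eq_Suc)
qed

lemma card_non_hub_neighbours:
  assumes "\<not> is_hub K x"
  shows "card {y\<in>S. hub_chain K x y} \<le> 2"
proof -
  have "card {y\<in>S. hub_chain K x y} \<le> card {x div K * K + 2, (x div K - 1) * K + 2}"
    using non_hub_neighbours[OF assms] by (intro card_mono) auto
  also have "\<dots> \<le> 2" by (simp add: card_insert_le_m1)
  finally show ?thesis .
qed

lemma card_pendant_neighbours: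
  assumes "\<not> is_hub K x" "1 < x mod K"
  shows "card {y\<in>S. hub_chain K x y} \<le> 1"
proof -
  have "card {y\<in>S. hub_chain K x y} \<le> card {x div K * K + 2}"
    using non_hub_neighbours[OF assms(1)] assms(2) by (intro card_mono) auto
  then show ?thesis by simp
qed

lemma attached_no_hub_between:
  assumes "attached K z g" "is_hub K h" "min z g < h" "h < max z g"
  shows False
proof -
  have "g = g div K * K + 2" "h = h div K * K + 2" using assms(1,2) is_hub_eq unfolding attached_def by auto
  then have "h div K \<noteq> g div K" using assms(3,4) by (metis max_def min_def not_less_iff_gr_or_eq)
  from assms(1) consider "g div K = z div K" | "z mod K \<le> 1" "z div K = Suc (g div K)"
    unfolding attached_def by blast
  then show False
  proof cases
    case 1
    have "min z g div K \<le> h div K" "h div K \<le> max z g div K" using assms(3,4) by (simp_all add: div_le_mono)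
    then show False using 1 \<open>h div K \<noteq> g div K\<close> by (simp add: min_def max_def split: if_splits)
  next
    case 2
    then have "g < z" by (metis Suc_n_not_le_n div_le_mono not_le)
    then have "g div K \<le> h div K" "h div K \<le> z div K" using assms(3,4) by (simp_all add: div_le_mono)
    then have "h div K = z div K" using 2(2) \<open>h div K \<noteq> g div K\<close> by linarith
    then have "h = z div K * K + 2" using \<open>h = h div K * K + 2\<close> by simp
    moreover have "z = z div K * K + z mod K" by simp
    ultimately have "z < h" using 2(1) by linarith
    then show False using assms(4) \<open>g < z\<close> by simp
  qed
qed

lemma hub_chain_no_hub_between:
  assumes "hub_chain K x y" "x < h" "h < y" "is_hub K h"
  shows False
  using assms attached_no_hub_between[of K x y h] attached_no_hub_between[of K y x h]
  unfolding hub_chain_def by (auto simp: min_def max_def)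

lemma biconnected_hub_chain_no_hub_between:
  assumes "biconnected_on (hub_chain K) B" "h \<in> B" "is_hub K h" "u \<in> B" "w \<in> B" "u < h" "h < w"
  shows False
proof -
  have "reachable_in (hub_chain K) (B - {h}) u w"
    using assms unfolding biconnected_on_def connected_on_iff_reachable_in by auto
  then obtain s t where "s < h" "\<not> t < h" "t \<in> B - {h}" "hub_chain K s t"
    by (rule reachable_in_crosses[where A = "{z. z < h}"]) (use assms(6,7) in auto)
  then show False using hub_chain_no_hub_between[of K s t h] assms(3) by auto
qed

lemma between_consecutive_hubs:
  fixes i K z :: nat
  assumes "1 \<le> i" "2 < K" "(i - 1) * K + 2 \<le> z" "z \<le> i * K + 2" "is_hub K z \<or> z mod K \<le> 1"
  shows "z \<in> {(i - 1) * K + 2, i * K, i * K + 1, i * K + 2}"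
proof -
  have "i - 1 \<le> z div K" using div_le_mono[OF assms(3), of K] block_div_mod(1)[OF assms(2)] by simp
  moreover have "z div K \<le> i" using div_le_mono[OF assms(4), of K] block_div_mod(1)[OF assms(2)] by simp
  ultimately consider "z div K = i - 1" | "z div K = i" by linarith
  then show ?thesis
  proof cases
    case 1
    then have "z = (i - 1) * K + z mod K" by (metis div_mult_mod_eq)
    then show ?thesis using assms(3,5) unfolding is_hub_def by auto
  next
    case 2
    then have "z = i * K + z mod K" by (metis div_mult_mod_eq)
    moreover have "z mod K \<le> 2" using calculation assms(4) by linarith
    ultimately show ?thesis by (auto simp: le_Suc_eq numeral_2_eq_2)
  qed
qed

lemma biconnected_hub_chain_subset:
  assumes "3 \<le> K" "finite B" "biconnected_on (hub_chain K) B" "3 \<le> card B"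
  obtains i where "1 \<le> i" "(i - 1) * K + 2 \<in> B" "i * K + 2 \<in> B"
    "B \<subseteq> {(i - 1) * K + 2, i * K, i * K + 1, i * K + 2}"
proof -
  have deg: "2 \<le> card {u\<in>B. hub_chain K x u}" if "x \<in> B" for x
    using biconnected_on_degree_ge_2[OF assms(3,2,4) that] .
  obtain l where l: "l \<in> B" "\<not> is_hub K l"
  proof -
    have "B \<noteq> {}" using assms(4) by auto
    then obtain x where "x \<in> B" by blast
    then have "{u\<in>B. hub_chain K x u} \<noteq> {}" using deg by (metis card.empty not_numeral_le_zero)
    then obtain u where "u \<in> B" "hub_chain K x u" by auto
    then show ?thesis using that hubs_not_adjacent[of K x u] \<open>x \<in> B\<close> by blast
  qed
  define i where "i = l div K"
  define L R where "L = (i - 1) * K + 2" and "R = i * K + 2"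
  have "{u\<in>B. hub_chain K l u} \<subseteq> {R, L}"
    using non_hub_neighbours[OF l(2)] unfolding i_def L_def R_def by auto
  then have "{u\<in>B. hub_chain K l u} = {R, L}" using deg[OF l(1)] by (rule subset_card_2_eq)
  then have LR: "L \<in> B" "R \<in> B" "L \<noteq> R" using deg[OF l(1)] by auto
  then have "1 \<le> i" unfolding L_def R_def by (cases i) auto
  have "2 < K" using assms(1) by simp
  then have hubs: "is_hub K L" "is_hub K R" unfolding is_hub_def L_def R_def by (rule block_div_mod(2))+
  have "B \<subseteq> {L, i * K, i * K + 1, R}"
  proof
    fix z assume z: "z \<in> B"
    have "L < R" using \<open>1 \<le> i\<close> \<open>2 < K\<close> unfolding L_def R_def by (cases i) auto
    then have "L \<le> z" "z \<le> R"
      using biconnected_hub_chain_no_hub_between[OF assms(3) LR(1) hubs(1) z LR(2)]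
        biconnected_hub_chain_no_hub_between[OF assms(3) LR(2) hubs(2) LR(1) z] by force+
    moreover have "is_hub K z \<or> z mod K \<le> 1"
      using deg[OF z] card_pendant_neighbours[of K z B] by fastforce
    ultimately show "z \<in> {L, i * K, i * K + 1, R}"
      using between_consecutive_hubs[OF \<open>1 \<le> i\<close>] assms(1) unfolding L_def R_def by simp
  qed
  then show ?thesis using that \<open>1 \<le> i\<close> LR unfolding L_def R_def by blast
qed

lemma biconnected_hub_chain_cycle:
  assumes "3 \<le> K" "finite B" "biconnected_on (hub_chain K) B" "3 \<le> card B"
  shows "is_cycle_on (hub_chain K) B"
proof -
  obtain i where i: "1 \<le> i" and LR: "(i - 1) * K + 2 \<in> B" "i * K + 2 \<in> B"
    and sub: "B \<subseteq> {(i - 1) * K + 2, i * K, i * K + 1, i * K + 2}"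
    by (rule biconnected_hub_chain_subset[OF assms])
  let ?L = "(i - 1) * K + 2" and ?a = "i * K" and ?b = "i * K + 1" and ?R = "i * K + 2"
  have K: "0 < K" "1 < K" "2 < K" using assms(1) by auto
  have div: "?L div K = i - 1" "?a div K = i" "?b div K = i" "?R div K = i"
    and mod: "?L mod K = 2" "?a mod K = 0" "?b mod K = 1" "?R mod K = 2"
    using block_div_mod[OF K(3)] block_div_mod[OF K(2)] block_div_mod[OF K(1)] by simp_all
  have edges: "hub_chain K ?L ?a" "hub_chain K ?a ?R" "hub_chain K ?R ?b" "hub_chain K ?b ?L"
    using div mod i unfolding hub_chain_def attached_def is_hub_def by auto
  have non_edges: "\<not> hub_chain K ?L ?R" "\<not> hub_chain K ?a ?b"
    using mod unfolding hub_chain_def attached_def is_hub_def by auto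
  have "distinct [?L, ?a, ?R, ?b]" using i K by (cases i) auto
  have "{u\<in>B. hub_chain K ?L u} \<subseteq> {?a, ?b}"
    using sub non_edges(1) irreflpD[OF irreflp_hub_chain] by auto
  moreover have "2 \<le> card {u\<in>B. hub_chain K ?L u}"
    by (rule biconnected_on_degree_ge_2[OF assms(3,2,4) LR(1)])
  ultimately have "{u\<in>B. hub_chain K ?L u} = {?a, ?b}" by (rule subset_card_2_eq)
  then have "?a \<in> B" "?b \<in> B" by auto
  then have "B = {?L, ?a, ?R, ?b}" using sub LR by auto
  then show ?thesis
    using is_cycle_on_4[OF symp_hub_chain irreflp_hub_chain \<open>distinct _\<close> edges non_edges] by simp
qed

lemma hub_chain_on_cactus:
  assumes "3 \<le> K"
  shows "cactus {..<n} (hub_chain_on K n)"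
proof (rule biconnected_cycles_cactus)
  show "simple_graph {..<n} (hub_chain_on K n)"
    unfolding simple_graph_def hub_chain_on_def
    using sympD[OF symp_hub_chain] irreflpD[OF irreflp_hub_chain] by blast
  show "biconnected_cycles (hub_chain_on K n) {..<n}"
    unfolding biconnected_cycles_def
  proof (intro allI impI)
    fix B assume B: "B \<subseteq> {..<n} \<and> biconnected_on (hub_chain_on K n) B \<and> 3 \<le> card B"
    have same: "\<And>x y. x \<in> B \<Longrightarrow> y \<in> B \<Longrightarrow> hub_chain_on K n x y = hub_chain K x y"
      using B unfolding hub_chain_on_def by auto
    have "finite B" using B finite_subset by blast
    moreover have "biconnected_on (hub_chain K) B" using B biconnected_on_cong[of B "hub_chain_on K n" "hub_chain K"] same by simp
    ultimately have "is_cycle_on (hub_chain K) B" using biconnected_hub_chain_cycle[OF assms] B by simp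
    then show "is_cycle_on (hub_chain_on K n) B" using is_cycle_on_cong[of B "hub_chain_on K n" "hub_chain K"] same by simp
  qed
qed

lemma hub_chain_on_no_large_k_dense:
  assumes "S \<subseteq> {..<n}" "k + 4 \<le> card S"
  shows "\<not> k_dense (hub_chain_on K n) k S"
proof
  assume dense: "k_dense (hub_chain_on K n) k S"
  have "finite S" using assms(1) finite_subset by blast
  have many: "3 \<le> card {u\<in>S. hub_chain_on K n v u}" if "v \<in> S" for v
    using k_dense_card_le[OF dense \<open>finite S\<close> that] assms(2) by linarith
  have hub: "is_hub K v" if "v \<in> S" for v
  proof (rule ccontr)
    assume "\<not> is_hub K v"
    then have "card {u\<in>S. hub_chain K v u} \<le> 2" by (rule card_non_hub_neighbours)
    moreover have "card {u\<in>S. hub_chain_on K n v u} \<le> card {u\<in>S. hub_chain K v u}"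
      using \<open>finite S\<close> unfolding hub_chain_on_def by (intro card_mono) auto
    ultimately show False using many[OF that] by simp
  qed
  obtain v where "v \<in> S" using assms(2) by fastforce
  then have "{u\<in>S. hub_chain_on K n v u} \<noteq> {}" using many by (metis card.empty not_numeral_le_zero)
  then obtain u where "u \<in> S" "hub_chain K v u" unfolding hub_chain_on_def by auto
  then show False using hubs_not_adjacent hub \<open>v \<in> S\<close> by blast
qed

lemma hub_neighbours_window:
  assumes "2 < K" "m * K \<le> y" "y < m * K + K + 2" "y \<noteq> m * K + 2"
  shows "hub_chain K (m * K + 2) y"
proof -
  have hub: "(m * K + 2) div K = m" "(m * K + 2) mod K = 2" using block_div_mod[OF assms(1)] by auto
  show ?thesis
  proof (cases "y < m * K + K")
    case True
    define t where "t = y - m * K"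
    then have "y = m * K + t" "t < K" "t \<noteq> 2" using True assms(2,4) by auto
    then have "attached K y (m * K + 2)" using hub unfolding attached_def is_hub_def by simp
    then show ?thesis unfolding hub_chain_def by simp
  next
    case False
    define t where "t = y - Suc m * K"
    then have "y = Suc m * K + t" "t \<le> 1" using False assms(3) by auto
    moreover have "t < K" using calculation assms(1) by simp
    ultimately have "attached K y (m * K + 2)"
      using hub block_div_mod[of t K "Suc m"] unfolding attached_def is_hub_def by auto
    then show ?thesis unfolding hub_chain_def by simp
  qed
qed

lemma sparse_hub_window:
  assumes "2 < K" "S \<subseteq> {..<N}" "k_sparse (hub_chain K) (K - 1) S" "m * K + 2 \<in> S"
    and "m * K + K + t \<le> N" "t \<le> 2"
  shows "t \<le> card (({..<N} - S) \<inter> {m * K..<m * K + K + t})"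
proof -
  let ?W = "{m * K..<m * K + K + t} - {m * K + 2}"
  have "card ?W = K - 1 + t" using assms(1) by (simp add: card_Diff_singleton)
  moreover have "hub_chain K (m * K + 2) y" if "y \<in> ?W" for y
    using that hub_neighbours_window[OF assms(1), of m y] assms(6) by auto
  then have "card ?W \<le> K - 1 + card (?W - S)"
    by (intro k_sparse_card_outside[OF assms(3) finite_subset[OF assms(2)] assms(4)]) auto
  moreover have "card (?W - S) \<le> card (({..<N} - S) \<inter> {m * K..<m * K + K + t})"
    using assms(5) by (intro card_mono) auto
  ultimately show ?thesis by linarith
qed

lemma card_Int_atLeastLessThan_split:
  fixes a b c :: nat
  assumes "finite D" "a \<le> b" "b \<le> c"
  shows "card (D \<inter> {a..<c}) = card (D \<inter> {a..<b}) + card (D \<inter> {b..<c})"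
proof -
  have "D \<inter> {a..<c} = (D \<inter> {a..<b}) \<union> (D \<inter> {b..<c})" using assms(2,3) by auto
  then show ?thesis using assms(1) by (simp add: card_Un_disjoint disjoint_iff)
qed

lemma card_window_split:
  fixes m K t :: nat
  assumes "finite D" "2 < K"
  shows "card (D \<inter> {m * K..<m * K + K + t}) = card (D \<inter> {m * K..<m * K + 2}) +
    card (D \<inter> {m * K + 2..<m * K + K}) + card (D \<inter> {m * K + K..<m * K + K + t})"
  using card_Int_atLeastLessThan_split[OF assms(1), of "m * K" "m * K + K" "m * K + K + t"]
    card_Int_atLeastLessThan_split[OF assms(1), of "m * K" "m * K + 2" "m * K + K"] assms(2)
  by simp

text \<open>A hub \<open>m * K + 2\<close> in \<open>S\<close> has \<open>K + 1\<close> neighbours in \<open>{m * K..<m * K + K + 2}\<close>,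
so at least two of them are missing from \<open>S\<close>. The two vertices at the start of a block
lie in two such windows and are counted with weight one half, whence the factor 2.\<close>

lemma sparse_hub_chain_prefix:
  assumes "2 < K" "S \<subseteq> {..<N}" "k_sparse (hub_chain K) (K - 1) S" "m * K + 2 \<le> N"
  defines "D \<equiv> {..<N} - S"
  shows "2 * m \<le> 2 * card (D \<inter> {0..<m * K}) + card (D \<inter> {m * K..<m * K + 2})"
  using assms(4)
proof (induction m)
  case (Suc m)
  let ?A = "\<lambda>m. card (D \<inter> {m * K..<m * K + 2})"
  let ?B = "card (D \<inter> {m * K + 2..<m * K + K})"
  have "finite D" unfolding D_def by simp
  have split: "card (D \<inter> {0..<Suc m * K}) = card (D \<inter> {0..<m * K}) + ?A m + ?B"
    using card_Int_atLeastLessThan_split[OF \<open>finite D\<close>, of 0 "m * K" "Suc m * K"]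
      card_Int_atLeastLessThan_split[OF \<open>finite D\<close>, of "m * K" "m * K + 2" "m * K + K"] assms(1)
    by (simp add: add.commute)
  have "2 \<le> ?A m + 2 * ?B + ?A (Suc m)"
  proof (cases "m * K + 2 \<in> S")
    case True
    have "2 \<le> card (D \<inter> {m * K..<m * K + K + 2})"
      unfolding D_def using Suc.prems by (intro sparse_hub_window[OF assms(1-3) True]) simp_all
    also have "\<dots> = ?A m + ?B + ?A (Suc m)"
      using card_window_split[OF \<open>finite D\<close> assms(1), of m 2] by (simp add: add.commute)
    finally show ?thesis by linarith
  next
    case False
    then have "m * K + 2 \<in> D \<inter> {m * K + 2..<m * K + K}" using Suc.prems assms(1) unfolding D_def by auto
    then have "0 < ?B" using \<open>finite D\<close> by (subst card_gt_0_iff) auto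
    then show ?thesis by linarith
  qed
  with Suc.IH Suc.prems split show ?case by simp
qed simp

lemma sparse_hub_chain_last_block:
  assumes "2 < K" "S \<subseteq> {..<N}" "k_sparse (hub_chain K) (K - 1) S" "N = Suc m * K + 1"
  defines "D \<equiv> {..<N} - S"
  shows "Suc m \<le> card D"
proof -
  let ?X = "card (D \<inter> {0..<m * K})" and ?A = "card (D \<inter> {m * K..<m * K + 2})"
  let ?B = "card (D \<inter> {m * K + 2..<m * K + K})"
  let ?C = "card (D \<inter> {m * K + K..<m * K + K + 1})"
  have "finite D" unfolding D_def by simp
  have "m * K + 2 \<le> N" using assms(1,4) by simp
  then have "2 * m \<le> 2 * ?X + ?A" unfolding D_def by (rule sparse_hub_chain_prefix[OF assms(1-3)])
  moreover have "1 \<le> ?A + ?B + ?C"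
  proof (cases "m * K + 2 \<in> S")
    case True
    have "1 \<le> card (D \<inter> {m * K..<m * K + K + 1})"
      unfolding D_def by (intro sparse_hub_window[OF assms(1-3) True]) (use assms(4) in simp_all)
    then show ?thesis using card_window_split[OF \<open>finite D\<close> assms(1), of m 1] by simp
  next
    case False
    then have "m * K + 2 \<in> D \<inter> {m * K + 2..<m * K + K}" using assms(1,4) unfolding D_def by auto
    then have "0 < ?B" using \<open>finite D\<close> by (subst card_gt_0_iff) auto
    then show ?thesis by linarith
  qed
  moreover have "?X + card (D \<inter> {m * K..<m * K + K + 1}) \<le> card D"
    using card_Int_atLeastLessThan_split[OF \<open>finite D\<close>, of 0 "m * K" "m * K + K + 1"]
      card_mono[OF \<open>finite D\<close>, of "D \<inter> {0..<m * K + K + 1}"] by simp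
  ultimately show ?thesis using card_window_split[OF \<open>finite D\<close> assms(1), of m 1] by linarith
qed

lemma sparse_hub_chain_card_le:
  assumes "2 < K" "S \<subseteq> {..<N}" "k_sparse (hub_chain K) (K - 1) S" "1 \<le> N"
  shows "card S + (N - 1) div K \<le> N"
proof -
  define D where "D = {..<N} - S"
  define q where "q = (N - 1) div K"
  have "finite D" unfolding D_def by simp
  have "q * K \<le> N - 1" unfolding q_def by (simp add: div_times_less_eq_dividend)
  have "q \<le> card D"
  proof (cases "q * K + 2 \<le> N")
    case True
    have "2 * q \<le> 2 * card (D \<inter> {0..<q * K}) + card (D \<inter> {q * K..<q * K + 2})"
      unfolding D_def by (rule sparse_hub_chain_prefix[OF assms(1-3) True])
    moreover have "card (D \<inter> {0..<q * K}) + card (D \<inter> {q * K..<q * K + 2}) \<le> card D"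
      using card_Int_atLeastLessThan_split[OF \<open>finite D\<close>, of 0 "q * K" "q * K + 2"]
        card_mono[OF \<open>finite D\<close>, of "D \<inter> {0..<q * K + 2}"] by simp
    ultimately show ?thesis by linarith
  next
    case False
    then have "N = q * K + 1" using \<open>q * K \<le> N - 1\<close> assms(4) by simp
    then show ?thesis
      using sparse_hub_chain_last_block[OF assms(1-3)] unfolding D_def by (cases q) auto
  qed
  moreover have "card D = N - card S" unfolding D_def using assms(2) by (simp add: card_Diff_subset finite_subset)
  moreover have "card S \<le> N" using card_mono[OF finite_lessThan assms(2)] by simp
  ultimately show ?thesis unfolding q_def by linarith
qed

lemma hub_chain_on_sparse_card_le:
  assumes "2 \<le> k" "S \<subseteq> {..<n}" "k_sparse (hub_chain_on (k + 1) n) k S" "n \<le> N" "1 \<le> N"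
  shows "card S + (N - 1) div (k + 1) \<le> N"
proof (rule sparse_hub_chain_card_le)
  have "{u \<in> S. hub_chain_on (k + 1) n v u} = {u \<in> S. hub_chain (k + 1) v u}" if "v \<in> S" for v
    using assms(2) that unfolding hub_chain_on_def by auto
  then show "k_sparse (hub_chain (k + 1)) (k + 1 - 1) S"
    using assms(3) unfolding k_sparse_def by simp
qed (use assms in auto)

section \<open>The Ramsey number of cacti\<close>

definition cactus_ramsey :: "nat \<Rightarrow> nat \<Rightarrow> nat \<Rightarrow> nat \<Rightarrow> bool" where
  "cactus_ramsey k i j n \<longleftrightarrow> (\<forall>E. simple_graph {..<n} E \<and> cactus {..<n} E \<longrightarrow>
     (\<exists>S\<subseteq>{..<n}. card S = i \<and> k_dense E k S) \<or> (\<exists>S\<subseteq>{..<n}. card S = j \<and> k_sparse E k S))"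

lemma ramsey_class_cactus_ramsey: "ramsey_class cactus k i j = (LEAST n. cactus_ramsey k i j n)"
  unfolding ramsey_class_def cactus_ramsey_def ..

lemma cactus_ramsey_if_large:
  assumes "2 \<le> k" "j + (n - 1) div (k + 1) \<le> n"
  shows "cactus_ramsey k i j n"
  unfolding cactus_ramsey_def using cactus_k_sparse_subset[OF _ assms] by blast

lemma not_cactus_ramsey_if_small:
  assumes "2 \<le> k" "k + 4 \<le> i" "n \<le> N" "1 \<le> N" "N < j + (N - 1) div (k + 1)"
  shows "\<not> cactus_ramsey k i j n"
proof -
  let ?E = "hub_chain_on (k + 1) n"
  have "cactus {..<n} ?E" using assms(1) by (intro hub_chain_on_cactus) simp
  moreover have "\<not> k_dense ?E k S" if "S \<subseteq> {..<n}" "card S = i" for S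
    using hub_chain_on_no_large_k_dense[OF that(1)] that(2) assms(2) by simp
  moreover have "\<not> k_sparse ?E k S" if "S \<subseteq> {..<n}" "card S = j" for S
    using hub_chain_on_sparse_card_le[OF assms(1) that(1) _ assms(3,4)] that(2) assms(5) by linarith
  ultimately show ?thesis unfolding cactus_ramsey_def cactus_def by blast
qed

lemma ceiling_div_quotients:
  fixes j k :: nat
  assumes "2 \<le> j" "1 \<le> k"
  defines "c \<equiv> nat \<lceil>real (j - 1) / real k\<rceil>"
  shows "1 \<le> c" "(j - 1 + c - 1) div (k + 1) = c - 1" "(j - 1 + c - 1 - 1) div (k + 1) = c - 1"
proof -
  have "0 < real (j - 1) / real k" using assms(1,2) by simp
  then have "0 < \<lceil>real (j - 1) / real k\<rceil>" by (simp only: zero_less_ceiling)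
  then have ceil: "real c = of_int \<lceil>real (j - 1) / real k\<rceil>" "0 < c"
    unfolding c_def using assms(1) by simp_all
  then show "1 \<le> c" by simp
  have "real (j - 1) / real k \<le> real c" "real c - 1 < real (j - 1) / real k"
    using ceil(1) ceiling_correct[of "real (j - 1) / real k"] by linarith+
  then have "real (j - 1) \<le> real c * real k" "(real c - 1) * real k < real (j - 1)"
    using assms(2) by (simp_all add: divide_le_eq less_divide_eq)
  moreover obtain d where d: "c = Suc d" using ceil(2) by (cases c) auto
  ultimately have "j - 1 \<le> d * k + k" "d * k < j - 1"
    by (simp_all add: algebra_simps flip: of_nat_mult of_nat_add)
  then show "(j - 1 + c - 1) div (k + 1) = c - 1" "(j - 1 + c - 1 - 1) div (k + 1) = c - 1"
    using assms(1) d by (auto intro!: div_nat_eqI simp: algebra_simps)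
qed

theorem theorem4p3:
  fixes i j k :: nat
  assumes "j \<ge> 2" and "k \<ge> 2" and "i \<ge> k + 4"
  shows "ramsey_class cactus k i j = j - 1 + nat \<lceil>real (j - 1) / real k\<rceil>"
proof -
  define c where "c = nat \<lceil>real (j - 1) / real k\<rceil>"
  define n0 where "n0 = j - 1 + c"
  have c: "1 \<le> c" "(n0 - 1) div (k + 1) = c - 1" "(n0 - 1 - 1) div (k + 1) = c - 1"
    using ceiling_div_quotients[of j k] assms(1,2) unfolding n0_def c_def by auto
  have "cactus_ramsey k i j n0"
    by (rule cactus_ramsey_if_large[OF assms(2)]) (use c n0_def assms(1) in linarith)
  moreover have "\<not> cactus_ramsey k i j n" if "n < n0" for n
  proof (rule not_cactus_ramsey_if_small[OF assms(2,3)])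
    show "n \<le> n0 - 1" "1 \<le> n0 - 1" "n0 - 1 < j + (n0 - 1 - 1) div (k + 1)"
      using that c n0_def assms(1) by linarith+
  qed
  ultimately have "(LEAST n. cactus_ramsey k i j n) = n0"
    by (intro Least_equality) (auto simp: not_less[symmetric])
  then show ?thesis by (simp add: ramsey_class_cactus_ramsey n0_def c_def)
qed

end
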